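(* Let $\alpha\in[0,1]$ or $\alpha\in[2,3]$, and let $2+2\alpha<p<2(2+\alpha)$. If $$\begin{aligned}&\frac{1}{2p-4\alpha-4}-\frac{1}{(2p-4\alpha-4)^2}\frac{1}{B\left(\frac{2+\alpha}{p},2p-4\alpha-4\right)}-\alpha\left(\frac{1}{2p-4\alpha}-\frac{1}{(2p-4\alpha)^2}\frac{1}{B\left(\frac{2+\alpha}{p},2p-4\alpha\right)}\right)\\&+\frac{\alpha(\alpha-1)}{2}\left(\frac{1}{2p-4\alpha+4}-\frac{1}{(2p-4\alpha+4)^2}\frac{1}{B\left(\frac{2+\alpha}{p},2p-4\alpha+4\right)}\right)-\frac{1}{4(\alpha+1)}\le0,\end{aligned}$$ then $$\int_0^1 I_t\left(\frac{2+\alpha}{p},1-\frac{2+\alpha}{p}\right)t^{2p-4\alpha-5}(1-t^4)^\alpha\,dt-\frac{1}{4(\alpha+1)}\le0.$$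
   Context: $B(x,y)=\int_0^1 u^{x-1}(1-u)^{y-1}du$ is the Beta function, $B_t(x,y)=\int_0^t u^{x-1}(1-u)^{y-1}du$ the incomplete Beta function, and $I_t(x,y)=B_t(x,y)/B(x,y)$ the regularized incomplete Beta function. *)

theory Defs
  imports "HOL-Analysis.Analysis"
begin

definition betaB :: "real \<Rightarrow> real \<Rightarrow> real" where
  "betaB x y = integral {0..1} (\<lambda>u. u powr (x - 1) * (1 - u) powr (y - 1))"

definition betaInc :: "real \<Rightarrow> real \<Rightarrow> real \<Rightarrow> real" where
  "betaInc t x y = integral {0..t} (\<lambda>u. u powr (x - 1) * (1 - u) powr (y - 1))"

definition betaReg :: "real \<Rightarrow> real \<Rightarrow> real \<Rightarrow> real" where
  "betaReg t x y = betaInc t x y / betaB x y"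

end

theory Submission
  imports Defs
begin

text \<open>Write \<open>a = (2 + \<alpha>)/p\<close> and \<open>s = 2p - 4\<alpha> - 4\<close>. Integrating by parts and using
  \<open>B(a, s) B(a + s, 1 - a) = B(a, 1 - a) B(1, s)\<close> gives the moments
  \<open>\<integral>\<^sub>0\<^sup>1 I\<^sub>t(a, 1 - a) t\<^sup>s\<^sup>-\<^sup>1 dt = 1/s - 1/(s\<^sup>2 B(a, s))\<close>.
  For the admissible \<open>\<alpha>\<close> the third Taylor coefficient of \<open>(1 - x)\<^sup>\<alpha>\<close> is non-positive, so
  \<open>(1 - t\<^sup>4)\<^sup>\<alpha> \<le> 1 - \<alpha> t\<^sup>4 + \<alpha>(\<alpha> - 1)/2 t\<^sup>8\<close>; hence the integral is bounded by the combination of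
  the moments at \<open>s\<close>, \<open>s + 4\<close>, \<open>s + 8\<close> appearing in the hypothesis.\<close>

lemma integral_has_real_derivative_Ioo:
  fixes g :: "real \<Rightarrow> real"
  assumes g_int: "g integrable_on {a..b}" and g_cont: "continuous_on {a<..<b} g"
    and x: "x \<in> {a<..<b}"
  shows "((\<lambda>t. integral {a..t} g) has_real_derivative g x) (at x)"
proof -
  define c where "c = (a + x) / 2"
  define d where "d = (x + b) / 2"
  have cd: "a < c" "c < x" "x < d" "d < b" using x by (auto simp: c_def d_def)
  have "continuous_on {c..d} g" by (rule continuous_on_subset[OF g_cont]) (use cd in auto)
  then have "((\<lambda>t. integral {c..t} g) has_real_derivative g x) (at x within {c..d})"
    by (rule integral_has_real_derivative) (use cd in auto)
  moreover have "x \<in> interior {c..d}" using cd by auto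
  ultimately have "((\<lambda>t. integral {c..t} g) has_real_derivative g x) (at x)"
    using at_within_interior by metis
  then have "((\<lambda>t. integral {a..c} g + integral {c..t} g) has_real_derivative g x) (at x)"
    using DERIV_add[OF DERIV_const] by fastforce
  then show ?thesis
  proof (rule has_field_derivative_transform_within_open[where S = "{c<..<d}"])
    fix t assume t: "t \<in> {c<..<d}"
    have "g integrable_on {a..t}" by (rule integrable_on_subinterval[OF g_int]) (use t cd in auto)
    then show "integral {a..c} g + integral {c..t} g = integral {a..t} g"
      using Henstock_Kurzweil_Integration.integral_combine[of a c t g] t cd by auto
  qed (use cd in auto)
qed

lemma integrable_on_Icc_if_dominated_on_Ioo:
  fixes f g :: "real \<Rightarrow> real"
  assumes "continuous_on {a<..<b} f" and "g integrable_on {a..b}"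
    and "\<And>x. x \<in> {a<..<b} \<Longrightarrow> \<bar>f x\<bar> \<le> g x"
  shows "f integrable_on {a..b}"
proof -
  have "f integrable_on {a<..<b}"
  proof (rule measurable_bounded_by_integrable_imp_integrable_real)
    show "f \<in> borel_measurable (lebesgue_on {a<..<b})"
      by (rule continuous_imp_measurable_on_sets_lebesgue) (use assms in auto)
  qed (use assms integrable_on_Icc_iff_Ioo in auto)
  then show ?thesis by (simp add: integrable_on_Icc_iff_Ioo)
qed

lemma integral_nonneg_if_nonneg:
  fixes f :: "'n::euclidean_space \<Rightarrow> real"
  assumes "\<And>x. x \<in> S \<Longrightarrow> 0 \<le> f x"
  shows "0 \<le> integral S f"
  using assms integral_nonneg not_integrable_integral by (metis order_refl)

lemma Beta_real_pos: "0 < a \<Longrightarrow> 0 < b \<Longrightarrow> 0 < Beta a (b :: real)"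
  unfolding Beta_def by simp

lemma Beta_one_left:
  assumes "0 < s"
  shows "Beta 1 s = 1 / (s :: real)"
proof -
  have "Gamma (s + 1) = s * Gamma s"
    using assms by (intro Gamma_plus1) (auto elim!: nonpos_Ints_cases)
  moreover have "0 < Gamma s" using assms by simp
  ultimately show ?thesis by (simp add: Beta_def add.commute)
qed

lemma Beta_mult_Beta_add:
  fixes a b s :: real
  assumes "0 < a" "0 < b" "0 < s"
  shows "Beta a s * Beta (a + s) b = Beta a b * Beta (a + b) s"
proof -
  have "0 < Gamma (a + s)" "0 < Gamma (a + b)" using assms by (simp_all add: add_pos_pos)
  moreover have "a + s + b = a + b + s" by simp
  ultimately show ?thesis unfolding Beta_def by (simp add: field_simps)
qed

lemma betaB_eq_Beta: "0 < x \<Longrightarrow> 0 < y \<Longrightarrow> betaB x y = Beta x y"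
  unfolding betaB_def using has_integral_Beta_real by (rule integral_unique)

lemma betaReg_nonneg: "0 \<le> betaReg t x y"
  unfolding betaReg_def betaInc_def betaB_def
  by (intro divide_nonneg_nonneg integral_nonneg_if_nonneg) simp_all

lemma continuous_on_betaInc:
  "0 < x \<Longrightarrow> 0 < y \<Longrightarrow> continuous_on {0..1} (\<lambda>t. betaInc t x y)"
  unfolding betaInc_def by (intro indefinite_integral_continuous_1 integrable_Beta')

lemma has_integral_betaInc_times_powr:
  fixes a b s :: real
  assumes a: "0 < a" and b: "0 < b" and s: "0 < s"
  shows "((\<lambda>t. betaInc t a b * t powr (s - 1)) has_integral (Beta a b - Beta (a + s) b) / s) {0..1}"
proof -
  define f where "f = (\<lambda>u::real. u powr (a - 1) * (1 - u) powr (b - 1))"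
  define fs where "fs u = f u * u powr s" for u :: real
  define K where "K t = integral {0..t} fs" for t
  define H where "H t = (betaInc t a b * t powr s - K t) / s" for t
  have betaInc_f: "betaInc t a b = integral {0..t} f" for t by (simp add: betaInc_def f_def)
  have f_int: "(f has_integral Beta a b) {0..1}"
    unfolding f_def by (rule has_integral_Beta_real[OF a b])
  have fs_int: "(fs has_integral Beta (a + s) b) {0..1}"
  proof (rule has_integral_spike_finite[OF _ _ has_integral_Beta_real[of "a + s" b]])
    show "fs u = u powr (a + s - 1) * (1 - u) powr (b - 1)" if "u \<in> {0..1} - {0}" for u
      using that by (simp add: fs_def f_def powr_add[symmetric] algebra_simps)
  qed (use a b s in auto)
  have f_cont: "continuous_on {0<..<1} f" unfolding f_def
    by (intro continuous_intros) auto
  have fs_cont: "continuous_on {0<..<1} fs" unfolding fs_def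
    by (intro continuous_intros f_cont) auto
  have "continuous_on {0..1} (\<lambda>t. betaInc t a b)" by (rule continuous_on_betaInc[OF a b])
  moreover have "continuous_on {0..1} K"
    unfolding K_def using fs_int by (intro indefinite_integral_continuous_1) blast
  ultimately have H_cont: "continuous_on {0..1} H" unfolding H_def
    by (intro continuous_intros continuous_on_powr') (use s in auto)
  have H_deriv: "(H has_vector_derivative betaInc x a b * x powr (s - 1)) (at x)"
    if x: "x \<in> {0<..<1}" for x
  proof -
    have "((\<lambda>t. betaInc t a b) has_real_derivative f x) (at x)"
      unfolding betaInc_f using f_int f_cont x by (intro integral_has_real_derivative_Ioo) blast+
    moreover have "(K has_real_derivative fs x) (at x)"
      unfolding K_def using fs_int fs_cont x by (intro integral_has_real_derivative_Ioo) blast+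
    ultimately have "(H has_real_derivative
        (f x * x powr s + betaInc x a b * (s * x powr (s - 1)) - fs x) / s) (at x)"
      unfolding H_def using x s by (auto intro!: derivative_eq_intros)
    then show ?thesis
      using s by (simp add: fs_def has_real_derivative_iff_has_vector_derivative)
  qed
  have "((\<lambda>t. betaInc t a b * t powr (s - 1)) has_integral (H 1 - H 0)) {0..1}"
    by (rule fundamental_theorem_of_calculus_interior[OF _ H_cont H_deriv]) auto
  moreover have "H 1 - H 0 = (Beta a b - Beta (a + s) b) / s"
    using integral_unique[OF f_int] integral_unique[OF fs_int]
    by (simp add: H_def K_def betaInc_f)
  ultimately show ?thesis by simp
qed

definition betaReg_moment :: "real \<Rightarrow> real \<Rightarrow> real" where
  "betaReg_moment a s = 1 / s - 1 / s^2 / betaB a s"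

lemma has_integral_betaReg_times_powr:
  fixes a s :: real
  assumes a: "0 < a" "a < 1" and s: "0 < s"
  shows "((\<lambda>t. betaReg t a (1 - a) * t powr (s - 1)) has_integral betaReg_moment a s) {0..1}"
proof -
  define B where "B = Beta a (1 - a)"
  have B_pos: "0 < B" unfolding B_def using a by (simp add: Beta_real_pos)
  have Bs_pos: "0 < Beta a s" using a s by (simp add: Beta_real_pos)
  have "Beta a s * Beta (a + s) (1 - a) = B * (1 / s)"
    using Beta_mult_Beta_add[of a "1 - a" s] Beta_one_left[OF s] a s by (simp add: B_def)
  then have "(B - Beta (a + s) (1 - a)) / s * (1 / B) = 1 / s - 1 / s^2 / Beta a s"
    using B_pos Bs_pos s by (simp add: field_simps power2_eq_square)
  moreover have "betaReg t a (1 - a) = betaInc t a (1 - a) * (1 / B)" for t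
    unfolding betaReg_def B_def using a by (simp add: betaB_eq_Beta)
  ultimately show ?thesis
    using has_integral_mult_left[OF has_integral_betaInc_times_powr[of a "1 - a" s], of "1 / B"]
      a s by (simp add: betaReg_moment_def B_def betaB_eq_Beta mult.commute mult.left_commute)
qed

lemma one_minus_powr_le_quadratic:
  fixes \<alpha> x :: real
  assumes third_coeff: "0 \<le> \<alpha> * (\<alpha> - 1) * (\<alpha> - 2)" and x: "0 \<le> x" "x \<le> 1"
  shows "(1 - x) powr \<alpha> \<le> 1 - \<alpha> * x + \<alpha> * (\<alpha> - 1) / 2 * x^2"
proof -
  consider "x = 0" | "0 < x" "x < 1" | "x = 1" using x by linarith
  then show ?thesis
  proof cases
    case 1
    then show ?thesis by simp
  next
    case 2
    define D where "D m t = (-1)^m * (\<Prod>i<m. \<alpha> - real i) * (1 - t) powr (\<alpha> - real m)" for m t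
    have D_deriv: "(D m has_real_derivative D (Suc m) t) (at t)" if "t \<le> x" for m t
    proof -
      have "1 - t > 0" using that 2 by auto
      then have "(D m has_real_derivative
          (-1)^m * (\<Prod>i<m. \<alpha> - real i) * ((\<alpha> - real m) * (1 - t) powr (\<alpha> - real m - 1) * -1)) (at t)"
        unfolding D_def by (auto intro!: derivative_eq_intros)
      then show ?thesis by (simp add: D_def algebra_simps)
    qed
    have "D 0 = (\<lambda>x. (1 - x) powr \<alpha>)" by (simp add: D_def fun_eq_iff)
    moreover have "\<forall>m t. m < 3 \<and> 0 \<le> t \<and> t \<le> x \<longrightarrow> DERIV (D m) t :> D (Suc m) t"
      using D_deriv by blast
    ultimately obtain t where taylor: "(1 - x) powr \<alpha> = (\<Sum>m<3. D m 0 / fact m * x^m) + D 3 t / fact 3 * x^3"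
      using Maclaurin[of x 3 D] 2 by auto
    have "(\<Sum>m<3. D m 0 / fact m * x^m) = 1 - \<alpha> * x + \<alpha> * (\<alpha> - 1) / 2 * x^2"
      by (simp add: D_def numeral_3_eq_3 lessThan_Suc algebra_simps power2_eq_square)
    moreover have "D 3 t = - (\<alpha> * (\<alpha> - 1) * (\<alpha> - 2)) * (1 - t) powr (\<alpha> - 3)"
      by (simp add: D_def numeral_3_eq_3 lessThan_Suc algebra_simps)
    then have "D 3 t / fact 3 * x^3 \<le> 0"
      using third_coeff 2 by (simp add: mult_nonpos_nonneg divide_nonpos_pos)
    ultimately show ?thesis using taylor by linarith
  next
    case 3
    have "0 \<le> (\<alpha> - 1) * (\<alpha> - 2)"
    proof (rule ccontr)
      assume "\<not> 0 \<le> (\<alpha> - 1) * (\<alpha> - 2)"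
      then have "(\<alpha> - 1) * (\<alpha> - 2) < 0" by simp
      moreover from this have "1 < \<alpha>" by (auto simp: mult_less_0_iff)
      ultimately have "\<alpha> * ((\<alpha> - 1) * (\<alpha> - 2)) < 0" by (simp add: mult_pos_neg)
      with third_coeff show False by (simp add: mult.assoc)
    qed
    then show ?thesis using 3 by (simp add: field_simps power2_eq_square)
  qed
qed

lemma powr_mult_one_minus_pow4_powr_le:
  fixes \<alpha> r t :: real
  assumes "0 \<le> \<alpha> * (\<alpha> - 1) * (\<alpha> - 2)" and t: "0 \<le> t" "t \<le> 1"
  shows "t powr r * (1 - t^4) powr \<alpha>
    \<le> t powr r - \<alpha> * t powr (r + 4) + \<alpha> * (\<alpha> - 1) / 2 * t powr (r + 8)"
proof (cases "t = 0")
  case False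
  then have "t powr (r + 4) = t powr r * t^4" "t powr (r + 8) = t powr r * (t^4)^2"
    using t by (simp_all add: powr_add flip: power_mult)
  moreover have "(1 - t^4) powr \<alpha> \<le> 1 - \<alpha> * t^4 + \<alpha> * (\<alpha> - 1) / 2 * (t^4)^2"
    using assms by (intro one_minus_powr_le_quadratic) (auto simp: power_le_one)
  then have "t powr r * (1 - t^4) powr \<alpha> \<le> t powr r * (1 - \<alpha> * t^4 + \<alpha> * (\<alpha> - 1) / 2 * (t^4)^2)"
    by (rule mult_left_mono) simp
  ultimately show ?thesis by (simp add: algebra_simps)
qed simp

lemma integral_betaReg_powr_one_minus_pow4_le:
  fixes a s \<alpha> :: real
  assumes a: "0 < a" "a < 1" and s: "0 < s" and \<alpha>: "0 \<le> \<alpha> * (\<alpha> - 1) * (\<alpha> - 2)"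
  shows "integral {0..1} (\<lambda>t. betaReg t a (1 - a) * t powr (s - 1) * (1 - t^4) powr \<alpha>)
    \<le> betaReg_moment a s - \<alpha> * betaReg_moment a (s + 4)
       + \<alpha> * (\<alpha> - 1) / 2 * betaReg_moment a (s + 8)"
proof -
  define F where "F t = betaReg t a (1 - a) * t powr (s - 1) * (1 - t^4) powr \<alpha>" for t
  define G where "G t = betaReg t a (1 - a) * t powr (s - 1)
    - \<alpha> * (betaReg t a (1 - a) * t powr (s + 4 - 1))
    + \<alpha> * (\<alpha> - 1) / 2 * (betaReg t a (1 - a) * t powr (s + 8 - 1))" for t
  have G_int: "(G has_integral betaReg_moment a s - \<alpha> * betaReg_moment a (s + 4)
      + \<alpha> * (\<alpha> - 1) / 2 * betaReg_moment a (s + 8)) {0..1}"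
    unfolding G_def using a s
    by (intro has_integral_add has_integral_diff has_integral_mult_right
        has_integral_betaReg_times_powr) auto
  have F_le_G: "\<bar>F t\<bar> \<le> G t" if "t \<in> {0..1}" for t
  proof -
    have "\<bar>F t\<bar> = betaReg t a (1 - a) * (t powr (s - 1) * (1 - t^4) powr \<alpha>)"
      by (simp add: F_def betaReg_nonneg)
    also have "\<dots> \<le> betaReg t a (1 - a) * (t powr (s - 1) - \<alpha> * t powr (s - 1 + 4)
        + \<alpha> * (\<alpha> - 1) / 2 * t powr (s - 1 + 8))"
      using that by (intro mult_left_mono powr_mult_one_minus_pow4_powr_le \<alpha> betaReg_nonneg) auto
    also have "\<dots> = G t" by (simp add: G_def algebra_simps)
    finally show ?thesis .
  qed
  have "continuous_on {0<..<1} F"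
    unfolding F_def betaReg_def using continuous_on_betaInc[of a "1 - a"] Beta_real_pos[of a "1 - a"] a
    by (intro continuous_intros)
      (auto elim: continuous_on_subset dest!: power_eq_1_iff simp: betaB_eq_Beta)
  then have "F integrable_on {0..1}"
    by (rule integrable_on_Icc_if_dominated_on_Ioo[where g = G]) (use G_int F_le_G in auto)
  then have "integral {0..1} F \<le> integral {0..1} G"
    by (rule integral_le) (use G_int F_le_G abs_le_D1 in blast)+
  then show ?thesis unfolding F_def integral_unique[OF G_int] .
qed

theorem lemma4p1:
  fixes \<alpha> p :: real
  assumes halpha: "(0 \<le> \<alpha> \<and> \<alpha> \<le> 1) \<or> (2 \<le> \<alpha> \<and> \<alpha> \<le> 3)"
    and hp1: "2 + 2 * \<alpha> < p" and hp2: "p < 2 * (2 + \<alpha>)"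
    and hcond:
      "1 / (2*p - 4*\<alpha> - 4) - 1 / (2*p - 4*\<alpha> - 4)^2 / betaB ((2 + \<alpha>) / p) (2*p - 4*\<alpha> - 4)
       - \<alpha> * (1 / (2*p - 4*\<alpha>) - 1 / (2*p - 4*\<alpha>)^2 / betaB ((2 + \<alpha>) / p) (2*p - 4*\<alpha>))
       + \<alpha> * (\<alpha> - 1) / 2 * (1 / (2*p - 4*\<alpha> + 4)
            - 1 / (2*p - 4*\<alpha> + 4)^2 / betaB ((2 + \<alpha>) / p) (2*p - 4*\<alpha> + 4))
       - 1 / (4 * (\<alpha> + 1)) \<le> 0"
  shows "integral {0..1} (\<lambda>t. betaReg t ((2 + \<alpha>) / p) (1 - (2 + \<alpha>) / p)
            * t powr (2*p - 4*\<alpha> - 5) * (1 - t^4) powr \<alpha>) - 1 / (4 * (\<alpha> + 1)) \<le> 0"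
proof -
  define a where "a = (2 + \<alpha>) / p"
  define s where "s = 2*p - 4*\<alpha> - 4"
  have a: "0 < a" "a < 1" and s: "0 < s"
    using hp1 halpha by (auto simp: a_def s_def field_simps)
  have \<alpha>: "0 \<le> \<alpha> * (\<alpha> - 1) * (\<alpha> - 2)"
    using halpha by (auto intro: mult_nonpos_nonpos[OF mult_nonneg_nonpos] mult_nonneg_nonneg)
  have s_shifts: "s + 4 = 2*p - 4*\<alpha>" "s + 8 = 2*p - 4*\<alpha> + 4" by (simp_all add: s_def)
  have "betaReg_moment a s - \<alpha> * betaReg_moment a (s + 4)
      + \<alpha> * (\<alpha> - 1) / 2 * betaReg_moment a (s + 8) - 1 / (4 * (\<alpha> + 1)) \<le> 0"
    using hcond unfolding betaReg_moment_def s_shifts unfolding s_def a_def .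
  moreover have "2*p - 4*\<alpha> - 5 = s - 1" by (simp add: s_def)
  ultimately show ?thesis
    using integral_betaReg_powr_one_minus_pow4_le[OF a s \<alpha>] unfolding a_def[symmetric] by simp
qed

end
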